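(* Let $s\geq1$, let $(g_{\mu\nu})_{0\le\mu,\nu\le s}$ be a real symmetric invertible matrix with inverse $(g^{\mu\nu})$, and let $\mathcal{A}^!$ be the unital associative $\mathbb{C}$-algebra generated by $\theta^0,\dots,\theta^s$ with relations \[ \theta^\lambda\theta^\mu\theta^\nu=\frac{1}{s}\left(g^{\lambda\mu}\theta^\nu+g^{\mu\nu}\theta^\lambda-2g^{\lambda\nu}\theta^\mu\right)\mathbf{g},\qquad \lambda,\mu,\nu\in\{0,\dots,s\}, \] where $\mathbf{g}=\sum_{\alpha,\beta}g_{\alpha\beta}\theta^\alpha\theta^\beta$, graded by $\deg\theta^\lambda=1$. Then $\mathcal{A}^!_0=\mathbb{C}1$, $\mathcal{A}^!_1=\bigoplus_\lambda\mathbb{C}\theta^\lambda$, $\mathcal{A}^!_2=\bigoplus_{\mu,\nu}\mathbb{C}\theta^\mu\theta^\nu$, $\mathcal{A}^!_3=\bigoplus_\lambda\mathbb{C}\theta^\lambda\mathbf{g}$, $\mathcal{A}^!_4=\mathbb{C}\mathbf{g}^2$, and $\mathcal{A}^!_n=0$ for $n\geq5$. In particular $\dim\mathcal{A}^!_0=\dim\mathcal{A}^!_4=1$, $\dim\mathcal{A}^!_1=\dim\mathcal{A}^!_3=s+1$, $\dim\mathcal{A}^!_2=(s+1)^2$.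
   Context: $\mathcal{A}^!$ is the dual 3-homogeneous algebra $T(E^* )/(R^\perp)$ of the cubic Yang–Mills algebra $T(E)/(R)$ (generated by $\nabla_0,\dots,\nabla_s$ with relations $\sum_{\lambda,\mu}g^{\lambda\mu}[\nabla_\lambda,[\nabla_\mu,\nabla_\nu]]=0$), where $(\theta^\lambda)$ is the dual basis of $(\nabla_\lambda)$ and $R^\perp\subset E^{*\otimes3}$ is the annihilator of $R$; the displayed relations are its defining relations. *)

theory Defs
  imports Complex_Main "HOL-Library.Function_Algebras"
begin

text \<open>Noncommutative polynomials (elements of the tensor algebra T(E*)) are represented
  by their coefficient functions on words; generator \<open>\<theta>\<^sup>\<lambda>\<close> is the letter \<open>\<lambda>\<close>.\<close>

type_synonym ncpoly = "nat list \<Rightarrow> complex"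

definition cscale :: "complex \<Rightarrow> ncpoly \<Rightarrow> ncpoly" where
  "cscale c p = (\<lambda>w. c * p w)"

lemma vector_space_cscale: "vector_space cscale"
  by unfold_locales (auto simp: cscale_def fun_eq_iff algebra_simps)

interpretation nc: vector_space cscale
  by (rule vector_space_cscale)

definition mono :: "nat list \<Rightarrow> ncpoly" where
  "mono u = (\<lambda>w. if w = u then 1 else 0)"

definition ncmult :: "ncpoly \<Rightarrow> ncpoly \<Rightarrow> ncpoly" (infixl "**" 70) where
  "p ** q = (\<lambda>w. \<Sum>k\<le>length w. p (take k w) * q (drop k w))"

definition ncone :: ncpoly where "ncone = mono []"

definition theta :: "nat \<Rightarrow> ncpoly" where "theta l = mono [l]"

definition gel :: "nat \<Rightarrow> (nat \<Rightarrow> nat \<Rightarrow> real) \<Rightarrow> ncpoly" where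
  "gel s G = (\<Sum>\<alpha>\<le>s. \<Sum>\<beta>\<le>s. cscale (complex_of_real (G \<alpha> \<beta>)) (theta \<alpha> ** theta \<beta>))"

text \<open>The defining relation (lhs minus rhs), with \<open>Gi\<close> the inverse matrix \<open>g\<^sup>\<mu>\<^sup>\<nu>\<close>.\<close>
definition rel :: "nat \<Rightarrow> (nat \<Rightarrow> nat \<Rightarrow> real) \<Rightarrow> (nat \<Rightarrow> nat \<Rightarrow> real) \<Rightarrow> nat \<Rightarrow> nat \<Rightarrow> nat \<Rightarrow> ncpoly" where
  "rel s G Gi l m n =
     theta l ** theta m ** theta n
     - cscale (1 / of_nat s)
         ((cscale (complex_of_real (Gi l m)) (theta n)
           + cscale (complex_of_real (Gi m n)) (theta l)
           - cscale (2 * complex_of_real (Gi l n)) (theta m)) ** gel s G)"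

definition relideal :: "nat \<Rightarrow> (nat \<Rightarrow> nat \<Rightarrow> real) \<Rightarrow> (nat \<Rightarrow> nat \<Rightarrow> real) \<Rightarrow> ncpoly set" where
  "relideal s G Gi = nc.span {mono u ** rel s G Gi l m n ** mono v | u v l m n.
      set u \<subseteq> {..s} \<and> set v \<subseteq> {..s} \<and> l \<le> s \<and> m \<le> s \<and> n \<le> s}"

definition homog :: "nat \<Rightarrow> nat \<Rightarrow> ncpoly set" where
  "homog s n = {p. \<forall>w. p w \<noteq> 0 \<longrightarrow> length w = n \<and> set w \<subseteq> {..s}}"

text \<open>\<open>f\<close> restricted to \<open>B\<close> induces a basis of \<open>\<A>\<^sup>!\<^sub>n = T\<^sub>n / (I \<inter> T\<^sub>n)\<close>.\<close>
definition basis_mod :: "nat \<Rightarrow> (nat \<Rightarrow> nat \<Rightarrow> real) \<Rightarrow> (nat \<Rightarrow> nat \<Rightarrow> real) \<Rightarrow> nat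
    \<Rightarrow> 'i set \<Rightarrow> ('i \<Rightarrow> ncpoly) \<Rightarrow> bool" where
  "basis_mod s G Gi n B f \<longleftrightarrow>
     finite B \<and> f ` B \<subseteq> homog s n \<and>
     homog s n \<subseteq> nc.span (f ` B \<union> (relideal s G Gi \<inter> homog s n)) \<and>
     (\<forall>c. (\<Sum>i\<in>B. cscale (c i) (f i)) \<in> relideal s G Gi \<longrightarrow> (\<forall>i\<in>B. c i = 0))"

text \<open>Dimension of \<open>\<A>\<^sup>!\<^sub>n = T\<^sub>n / (I \<inter> T\<^sub>n)\<close>.\<close>
definition dimA :: "nat \<Rightarrow> (nat \<Rightarrow> nat \<Rightarrow> real) \<Rightarrow> (nat \<Rightarrow> nat \<Rightarrow> real) \<Rightarrow> nat \<Rightarrow> nat" where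
  "dimA s G Gi n = nc.dim (homog s n) - nc.dim (relideal s G Gi \<inter> homog s n)"

end

theory Submission
  imports Defs
begin

text \<open>Modulo the relations, \<open>\<^bold>g \<theta>\<^sup>\<lambda> \<equiv> \<theta>\<^sup>\<lambda> \<^bold>g\<close> and every cubic monomial reduces to a combination
  of the \<open>\<theta>\<^sup>\<lambda> \<^bold>g\<close>. Expanding \<open>\<theta>\<^sup>a\<theta>\<^sup>c \<^bold>g\<close>, and reducing \<open>\<Sum> g\<^sub>b\<^sub>d \<theta>\<^sup>a\<theta>\<^sup>b\<theta>\<^sup>c\<theta>\<^sup>d\<close> in two ways,
  gives two linear relations between \<open>\<theta>\<^sup>a\<theta>\<^sup>c \<^bold>g\<close>, \<open>\<theta>\<^sup>c\<theta>\<^sup>a \<^bold>g\<close> and \<open>\<^bold>g\<^sup>2\<close>, which solve to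
  \<open>\<theta>\<^sup>a\<theta>\<^sup>c \<^bold>g \<equiv> g\<^sup>a\<^sup>c \<^bold>g\<^sup>2 / (s + 1)\<close>; hence every quartic monomial is a multiple of \<open>\<^bold>g\<^sup>2\<close>.
  Then \<open>\<theta>\<^sup>a \<^bold>g\<^sup>2 \<equiv> \<^bold>g\<^sup>2 \<theta>\<^sup>a / (s + 1) \<equiv> \<theta>\<^sup>a \<^bold>g\<^sup>2 / (s + 1)\<close>, so \<open>\<theta>\<^sup>a \<^bold>g\<^sup>2 \<equiv> 0\<close> as \<open>s \<ge> 1\<close>, and
  everything of degree at least 5 vanishes. Below degree 3 there are no relations. In degrees 3
  and 4, independence is witnessed by functionals on words that vanish on all relations of that
  degree and are dual to the proposed basis; their values are the reduction coefficients
  themselves. The dimensions follow since a basis modulo the ideal together with a basis of the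
  homogeneous part of the ideal is a basis of the homogeneous component of the free algebra.\<close>

section \<open>The free algebra\<close>

lemma sum_ncpoly_apply: "(\<Sum>i\<in>A. f i) w = (\<Sum>i\<in>A. (f i :: ncpoly) w)"
  by (induct A rule: infinite_finite_induct) auto

lemma cscale_apply [simp]: "cscale c p w = c * p w"
  by (simp add: cscale_def)

lemma ncmult_apply: "(p ** q) w = (\<Sum>k\<le>length w. p (take k w) * q (drop k w))"
  by (simp add: ncmult_def)

lemma ncmult_add_left: "(p + q) ** r = p ** r + q ** r"
  by (simp add: ncmult_def fun_eq_iff sum.distrib distrib_right)

lemma ncmult_add_right: "r ** (p + q) = r ** p + r ** q"
  by (simp add: ncmult_def fun_eq_iff sum.distrib distrib_left)

lemma ncmult_diff_left: "(p - q) ** r = p ** r - q ** r"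
  by (simp add: ncmult_def fun_eq_iff sum_subtractf left_diff_distrib)

lemma ncmult_diff_right: "r ** (p - q) = r ** p - r ** q"
  by (simp add: ncmult_def fun_eq_iff sum_subtractf right_diff_distrib)

lemma ncmult_cscale_left: "cscale c p ** r = cscale c (p ** r)"
  by (simp add: ncmult_def fun_eq_iff sum_distrib_left mult.assoc)

lemma ncmult_cscale_right: "r ** cscale c p = cscale c (r ** p)"
  by (simp add: ncmult_def fun_eq_iff sum_distrib_left mult.left_commute)

lemma ncmult_zero_left [simp]: "0 ** r = 0"
  by (simp add: ncmult_def fun_eq_iff)

lemma ncmult_zero_right [simp]: "r ** 0 = 0"
  by (simp add: ncmult_def fun_eq_iff)

lemma ncmult_sum_left: "(\<Sum>i\<in>A. f i) ** r = (\<Sum>i\<in>A. f i ** r)"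
  by (simp add: fun_eq_iff ncmult_apply sum_ncpoly_apply sum_distrib_right)
    (simp add: sum.swap[of _ _ A])

lemma ncmult_sum_right: "r ** (\<Sum>i\<in>A. f i) = (\<Sum>i\<in>A. r ** f i)"
  by (simp add: fun_eq_iff ncmult_apply sum_ncpoly_apply sum_distrib_left)
    (simp add: sum.swap[of _ _ A])

lemma ncmult_assoc: "(p ** q) ** r = p ** (q ** r)"
proof (rule ext)
  fix w :: "nat list"
  define n where "n = length w"
  define F where "F = (\<lambda>j i. p (take j w) * q (take i (drop j w)) * r (drop (j + i) w))"
  have "((p ** q) ** r) w = (\<Sum>k\<le>n. \<Sum>j\<le>k. F j (k - j))"
    unfolding ncmult_apply n_def F_def
    by (auto simp: sum_distrib_right min_def drop_take intro!: sum.cong)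
  also have "\<dots> = (\<Sum>(j, i)\<in>{(j, i). j + i \<le> n}. F j i)"
    by (rule sum.triangle_reindex_eq[symmetric])
  also have "{(j, i). j + i \<le> n} = Sigma {..n} (\<lambda>j. {..n - j})"
    by auto
  also have "(\<Sum>(j, i)\<in>Sigma {..n} (\<lambda>j. {..n - j}). F j i) = (\<Sum>j\<le>n. \<Sum>i\<le>n - j. F j i)"
    by (rule sum.Sigma[symmetric]) auto
  also have "\<dots> = (p ** (q ** r)) w"
    unfolding ncmult_apply n_def F_def
    by (auto simp: sum_distrib_left mult.assoc add.commute intro!: sum.cong)
  finally show "((p ** q) ** r) w = (p ** (q ** r)) w" .
qed

lemma ncmult_apply_if_length_left:
  assumes "\<And>v. p v \<noteq> 0 \<Longrightarrow> length v = k"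
  shows "(p ** q) w = (if k \<le> length w then p (take k w) * q (drop k w) else 0)"
proof -
  have "p (take j w) * q (drop j w) = (if j = k then p (take k w) * q (drop k w) else 0)"
    if "j \<le> length w" for j
    using assms[of "take j w"] that by (cases "j = k") auto
  then show ?thesis
    by (simp add: ncmult_apply)
qed

lemma mono_ncmult_apply:
  "(mono u ** q) w = (if take (length u) w = u then q (drop (length u) w) else 0)"
proof -
  have "mono u v \<noteq> 0 \<Longrightarrow> length v = length u" for v
    by (simp add: mono_def split: if_splits)
  then have "(mono u ** q) w
      = (if length u \<le> length w then mono u (take (length u) w) * q (drop (length u) w) else 0)"
    by (rule ncmult_apply_if_length_left)
  then show ?thesis
    by (auto simp: mono_def)
qed

lemma mono_ncmult_mono: "mono u ** mono v = mono (u @ v)"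
  unfolding fun_eq_iff mono_ncmult_apply
  by (auto simp: mono_def append_eq_conv_conj) (metis append_take_drop_id)

lemma mono_Nil_ncmult: "mono [] ** p = p"
  by (simp add: fun_eq_iff mono_ncmult_apply)

lemma ncmult_mono_Nil: "p ** mono [] = p"
proof (rule ext)
  fix w
  have "(p ** mono []) w = (\<Sum>k\<le>length w. if k = length w then p w else 0)"
    unfolding ncmult_apply by (rule sum.cong) (auto simp: mono_def)
  then show "(p ** mono []) w = p w"
    by simp
qed

definition words :: "nat \<Rightarrow> nat \<Rightarrow> nat list set" where
  "words s n = {w. length w = n \<and> set w \<subseteq> {..s}}"

lemma finite_words [simp]: "finite (words s n)"
proof -
  have "words s n = {w. set w \<subseteq> {..s} \<and> length w = n}"
    by (auto simp: words_def)
  then show ?thesis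
    using finite_lists_length_eq[of "{..s}" n] by simp
qed

lemma homog_iff_words: "p \<in> homog s n \<longleftrightarrow> (\<forall>w. w \<notin> words s n \<longrightarrow> p w = 0)"
  by (auto simp: homog_def words_def)

lemma homog_eq_sum_mono:
  assumes "p \<in> homog s n"
  shows "p = (\<Sum>w\<in>words s n. cscale (p w) (mono w))"
proof (rule ext)
  fix v
  have "(\<Sum>w\<in>words s n. cscale (p w) (mono w)) v = (\<Sum>w\<in>words s n. if v = w then p v else 0)"
    unfolding sum_ncpoly_apply by (rule sum.cong) (auto simp: mono_def)
  also have "\<dots> = p v"
    using assms by (auto simp: homog_iff_words)
  finally show "p v = (\<Sum>w\<in>words s n. cscale (p w) (mono w)) v" ..
qed

lemma mono_homog: "set w \<subseteq> {..s} \<Longrightarrow> mono w \<in> homog s (length w)"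
  by (auto simp: homog_def mono_def)

lemma mono_homog_words: "w \<in> words s n \<Longrightarrow> mono w \<in> homog s n"
  by (auto simp: homog_iff_words mono_def)

lemma subspace_homog: "nc.subspace (homog s n)"
  by (auto simp: nc.subspace_def homog_iff_words)

lemma homog_subset_span_mono: "homog s n \<subseteq> nc.span (mono ` words s n)"
proof
  fix p assume p: "p \<in> homog s n"
  show "p \<in> nc.span (mono ` words s n)"
    by (subst homog_eq_sum_mono[OF p]) (intro nc.span_sum nc.span_scale nc.span_base; auto)
qed

lemma homog_add: "p \<in> homog s n \<Longrightarrow> q \<in> homog s n \<Longrightarrow> p + q \<in> homog s n"
  by (auto simp: homog_iff_words)

lemma homog_diff: "p \<in> homog s n \<Longrightarrow> q \<in> homog s n \<Longrightarrow> p - q \<in> homog s n"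
  by (auto simp: homog_iff_words)

lemma homog_cscale: "p \<in> homog s n \<Longrightarrow> cscale c p \<in> homog s n"
  by (auto simp: homog_iff_words)

lemma homog_sum: "(\<And>i. i \<in> A \<Longrightarrow> f i \<in> homog s n) \<Longrightarrow> (\<Sum>i\<in>A. f i) \<in> homog s n"
  by (induct A rule: infinite_finite_induct) (auto simp: homog_iff_words)

lemma homog_ncmult:
  assumes p: "p \<in> homog s a" and q: "q \<in> homog s b"
  shows "p ** q \<in> homog s (a + b)"
  unfolding homog_def
proof (intro CollectI allI impI)
  fix w assume "(p ** q) w \<noteq> 0"
  moreover have "p v \<noteq> 0 \<Longrightarrow> length v = a" for v
    using p by (simp add: homog_def)
  ultimately have w: "a \<le> length w" "p (take a w) \<noteq> 0" "q (drop a w) \<noteq> 0"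
    by (simp_all add: ncmult_apply_if_length_left split: if_splits)
  then have "length (drop a w) = b" "set (take a w) \<subseteq> {..s}" "set (drop a w) \<subseteq> {..s}"
    using p q by (auto simp: homog_def)
  moreover have "set w = set (take a w) \<union> set (drop a w)"
    by (metis append_take_drop_id set_append)
  ultimately show "length w = a + b \<and> set w \<subseteq> {..s}"
    using w by auto
qed

lemma theta_homog: "l \<le> s \<Longrightarrow> theta l \<in> homog s 1"
  using mono_homog[of "[l]" s] by (simp add: theta_def)

lemma gel_homog: "gel s G \<in> homog s 2"
  unfolding gel_def
  by (intro homog_sum homog_cscale) (metis one_add_one homog_ncmult theta_homog atMost_iff)

lemma rel_homog:
  assumes "l \<le> s" "m \<le> s" "n \<le> s"
  shows "rel s G Gi l m n \<in> homog s 3"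
proof -
  have theta: "theta x \<in> homog s 1" if "x \<in> {l, m, n}" for x
    using that assms theta_homog by auto
  have "theta l ** theta m ** theta n \<in> homog s (1 + 1 + 1)"
    by (intro homog_ncmult theta) auto
  moreover have "(cscale (complex_of_real (Gi l m)) (theta n) + cscale (complex_of_real (Gi m n)) (theta l)
      - cscale (2 * complex_of_real (Gi l n)) (theta m)) ** gel s G \<in> homog s (1 + 2)"
    by (intro homog_ncmult homog_add homog_diff homog_cscale theta gel_homog) auto
  ultimately show ?thesis
    unfolding rel_def by (intro homog_diff homog_cscale) (simp_all add: numeral_3_eq_3)
qed

section \<open>The relation ideal\<close>

definition rel_generators :: "nat \<Rightarrow> (nat \<Rightarrow> nat \<Rightarrow> real) \<Rightarrow> (nat \<Rightarrow> nat \<Rightarrow> real) \<Rightarrow> ncpoly set" where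
  "rel_generators s G Gi = {mono u ** rel s G Gi l m n ** mono v | u v l m n.
      set u \<subseteq> {..s} \<and> set v \<subseteq> {..s} \<and> l \<le> s \<and> m \<le> s \<and> n \<le> s}"

lemma relideal_eq_span: "relideal s G Gi = nc.span (rel_generators s G Gi)"
  by (simp add: relideal_def rel_generators_def)

lemma subspace_relideal: "nc.subspace (relideal s G Gi)"
  by (simp add: relideal_def)

lemmas relideal_zero = nc.subspace_0[OF subspace_relideal]
  and relideal_add = nc.subspace_add[OF subspace_relideal]
  and relideal_diff = nc.subspace_diff[OF subspace_relideal]
  and relideal_cscale = nc.subspace_scale[OF subspace_relideal]
  and relideal_sum = nc.subspace_sum[OF subspace_relideal]

lemma relideal_induct [consumes 1, case_names subspace generator]:
  assumes "x \<in> relideal s G Gi"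
    and "nc.subspace {x. P x}"
    and "\<And>u v l m n. set u \<subseteq> {..s} \<Longrightarrow> set v \<subseteq> {..s} \<Longrightarrow> l \<le> s \<Longrightarrow> m \<le> s \<Longrightarrow> n \<le> s
      \<Longrightarrow> P (mono u ** rel s G Gi l m n ** mono v)"
  shows "P x"
  using assms(1)[unfolded relideal_eq_span]
proof (induct rule: nc.span_induct)
  case base
  then show ?case using assms(2) by simp
next
  case (step y)
  then show ?case using assms(3) by (auto simp: rel_generators_def)
qed

lemma rel_generator_in_relideal:
  assumes "set u \<subseteq> {..s}" "set v \<subseteq> {..s}" "l \<le> s" "m \<le> s" "n \<le> s"
  shows "mono u ** rel s G Gi l m n ** mono v \<in> relideal s G Gi"
  unfolding relideal_eq_span rel_generators_def using assms by (intro nc.span_base) blast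

lemma rel_in_relideal: "l \<le> s \<Longrightarrow> m \<le> s \<Longrightarrow> n \<le> s \<Longrightarrow> rel s G Gi l m n \<in> relideal s G Gi"
  using rel_generator_in_relideal[of "[]" s "[]"] by (simp add: mono_Nil_ncmult ncmult_mono_Nil)

lemma mono_ncmult_relideal:
  assumes "x \<in> relideal s G Gi" "set w \<subseteq> {..s}"
  shows "mono w ** x \<in> relideal s G Gi"
  using assms(1)
proof (induct rule: relideal_induct)
  case subspace
  show ?case
    by (auto simp: nc.subspace_def ncmult_add_right ncmult_cscale_right intro: relideal_zero relideal_add relideal_cscale)
next
  case (generator u v l m n)
  then show ?case
    using assms(2) rel_generator_in_relideal[of "w @ u" s v l m n]
    by (simp add: ncmult_assoc mono_ncmult_mono[symmetric])
qed

lemma relideal_ncmult_mono: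
  assumes "x \<in> relideal s G Gi" "set w \<subseteq> {..s}"
  shows "x ** mono w \<in> relideal s G Gi"
  using assms(1)
proof (induct rule: relideal_induct)
  case subspace
  show ?case
    by (auto simp: nc.subspace_def ncmult_add_left ncmult_cscale_left intro: relideal_zero relideal_add relideal_cscale)
next
  case (generator u v l m n)
  then show ?case
    using assms(2) rel_generator_in_relideal[of u s "v @ w" l m n]
    by (simp add: ncmult_assoc mono_ncmult_mono[symmetric])
qed

lemma homog_ncmult_relideal:
  assumes "p \<in> homog s k" "x \<in> relideal s G Gi"
  shows "p ** x \<in> relideal s G Gi"
proof -
  have "p ** x = (\<Sum>w\<in>words s k. cscale (p w) (mono w ** x))"
    by (subst homog_eq_sum_mono[OF assms(1)]) (simp add: ncmult_sum_left ncmult_cscale_left)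
  also have "\<dots> \<in> relideal s G Gi"
    using assms(2) by (intro relideal_sum relideal_cscale mono_ncmult_relideal) (auto simp: words_def)
  finally show ?thesis .
qed

lemma relideal_ncmult_homog:
  assumes "p \<in> homog s k" "x \<in> relideal s G Gi"
  shows "x ** p \<in> relideal s G Gi"
proof -
  have "x ** p = (\<Sum>w\<in>words s k. cscale (p w) (x ** mono w))"
    by (subst homog_eq_sum_mono[OF assms(1)]) (simp add: ncmult_sum_right ncmult_cscale_right)
  also have "\<dots> \<in> relideal s G Gi"
    using assms(2) by (intro relideal_sum relideal_cscale relideal_ncmult_mono) (auto simp: words_def)
  finally show ?thesis .
qed

definition pairing :: "nat \<Rightarrow> nat \<Rightarrow> (nat list \<Rightarrow> complex) \<Rightarrow> ncpoly \<Rightarrow> complex" where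
  "pairing s n a p = (\<Sum>w\<in>words s n. a w * p w)"

lemma pairing_add: "pairing s n a (p + q) = pairing s n a p + pairing s n a q"
  by (simp add: pairing_def distrib_left sum.distrib)

lemma pairing_diff: "pairing s n a (p - q) = pairing s n a p - pairing s n a q"
  by (simp add: pairing_def right_diff_distrib sum_subtractf)

lemma pairing_cscale: "pairing s n a (cscale c p) = c * pairing s n a p"
  by (simp add: pairing_def sum_distrib_left mult_ac)

lemma pairing_sum: "pairing s n a (\<Sum>i\<in>A. f i) = (\<Sum>i\<in>A. pairing s n a (f i))"
  unfolding pairing_def sum_ncpoly_apply sum_distrib_left by (rule sum.swap)

lemma pairing_mono: "w \<in> words s n \<Longrightarrow> pairing s n a (mono w) = a w"
  by (simp add: pairing_def mono_def if_distrib cong: if_cong)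

text \<open>The functionals on \<open>T\<^sub>n\<close> with this property are those that factor through \<open>\<A>\<^sup>!\<^sub>n\<close>.\<close>
definition annihilates_relations ::
    "nat \<Rightarrow> (nat \<Rightarrow> nat \<Rightarrow> real) \<Rightarrow> (nat \<Rightarrow> nat \<Rightarrow> real) \<Rightarrow> nat \<Rightarrow> (nat list \<Rightarrow> complex) \<Rightarrow> bool" where
  "annihilates_relations s G Gi n a \<longleftrightarrow>
     (\<forall>u v l m k. set u \<subseteq> {..s} \<longrightarrow> set v \<subseteq> {..s} \<longrightarrow> l \<le> s \<longrightarrow> m \<le> s \<longrightarrow> k \<le> s
        \<longrightarrow> length u + 3 + length v = n \<longrightarrow> pairing s n a (mono u ** rel s G Gi l m k ** mono v) = 0)"

lemma annihilates_relations_low_degree: "n < 3 \<Longrightarrow> annihilates_relations s G Gi n a"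
  by (simp add: annihilates_relations_def)

lemma pairing_relideal:
  assumes a: "annihilates_relations s G Gi n a" and x: "x \<in> relideal s G Gi"
  shows "pairing s n a x = 0"
  using x
proof (induct rule: relideal_induct)
  case subspace
  have "pairing s n a 0 = 0"
    by (simp add: pairing_def)
  then show ?case
    by (simp add: nc.subspace_def pairing_add pairing_cscale)
next
  case (generator u v l m k)
  show ?case
  proof (cases "length u + 3 + length v = n")
    case True
    then show ?thesis
      using a generator by (simp add: annihilates_relations_def)
  next
    case False
    have "mono u ** rel s G Gi l m k ** mono v \<in> homog s (length u + 3 + length v)"
      using generator by (intro homog_ncmult mono_homog rel_homog)
    then have "(mono u ** rel s G Gi l m k ** mono v) w = 0" if "w \<in> words s n" for w
      using that False by (auto simp: homog_iff_words words_def)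
    then show ?thesis
      by (simp add: pairing_def)
  qed
qed

section \<open>Bases modulo the ideal\<close>

context vector_space
begin

lemma sum_scale_of_bool:
  assumes "finite B" "i \<in> B"
  shows "(\<Sum>k\<in>B. of_bool (k = i) *s f k) = f i"
proof -
  have "(\<Sum>k\<in>B. of_bool (k = i) *s f k) = (\<Sum>k\<in>B. if k = i then f k else 0)"
    by (intro sum.cong) auto
  then show ?thesis
    using assms by simp
qed

lemma inj_on_if_independent_modulo:
  assumes "subspace K" "finite B"
    and indep: "\<And>c. (\<Sum>i\<in>B. c i *s f i) \<in> K \<Longrightarrow> \<forall>i\<in>B. c i = 0"
  shows "inj_on f B"
proof (rule inj_onI, rule ccontr)
  fix i j assume ij: "i \<in> B" "j \<in> B" "f i = f j" "i \<noteq> j"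
  let ?c = "\<lambda>k. of_bool (k = i) - of_bool (k = j)"
  have "(\<Sum>k\<in>B. ?c k *s f k) = f i - f j"
    using assms(2) ij by (simp add: scale_left_diff_distrib sum_subtractf sum_scale_of_bool)
  then have "(\<Sum>k\<in>B. ?c k *s f k) \<in> K"
    using ij(3) subspace_0[OF assms(1)] by simp
  then show False
    using indep ij by fastforce
qed

lemma image_disjoint_if_independent_modulo:
  assumes "finite B"
    and indep: "\<And>c. (\<Sum>i\<in>B. c i *s f i) \<in> K \<Longrightarrow> \<forall>i\<in>B. c i = 0"
  shows "f ` B \<inter> K = {}"
proof (rule ccontr)
  assume "f ` B \<inter> K \<noteq> {}"
  then obtain i where i: "i \<in> B" "f i \<in> K"
    by blast
  then have "(\<Sum>k\<in>B. of_bool (k = i) *s f k) \<in> K"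
    using assms(1) by (simp add: sum_scale_of_bool)
  then show False
    using indep i(1) by fastforce
qed

lemma independent_Un_if_independent_modulo:
  assumes K: "subspace K" and B: "finite B"
    and indep: "\<And>c. (\<Sum>i\<in>B. c i *s f i) \<in> K \<Longrightarrow> \<forall>i\<in>B. c i = 0"
    and C: "independent C" "finite C" "C \<subseteq> K"
  shows "independent (f ` B \<union> C)"
proof (rule independent_if_scalars_zero)
  show "finite (f ` B \<union> C)"
    using B C by simp
next
  fix u x assume zero: "(\<Sum>x\<in>f ` B \<union> C. u x *s x) = 0" and x: "x \<in> f ` B \<union> C"
  have inj: "inj_on f B"
    by (rule inj_on_if_independent_modulo[OF K B indep])
  have "f ` B \<inter> C = {}"
    using image_disjoint_if_independent_modulo[OF B indep] C(3) by blast
  then have "(\<Sum>x\<in>f ` B \<union> C. u x *s x) = (\<Sum>i\<in>B. u (f i) *s f i) + (\<Sum>x\<in>C. u x *s x)"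
    using B C(2) inj by (simp add: sum.union_disjoint sum.reindex)
  then have split: "(\<Sum>i\<in>B. u (f i) *s f i) = - (\<Sum>x\<in>C. u x *s x)"
    using zero by (simp add: eq_neg_iff_add_eq_0)
  have "(\<Sum>x\<in>C. u x *s x) \<in> K"
    using C(3) by (intro subspace_sum[OF K] subspace_scale[OF K]) auto
  then have uB: "\<forall>i\<in>B. u (f i) = 0"
    using indep[of "\<lambda>i. u (f i)"] split subspace_neg[OF K] by simp
  then have "(\<Sum>x\<in>C. u x *s x) = 0"
    using split by simp
  then show "u x = 0"
    using x uB independentD[OF C(1) C(2)] by blast
qed

lemma dim_eq_card_add_dim_if_independent_modulo:
  assumes K: "subspace K" "K \<subseteq> H"
    and H: "finite F" "H \<subseteq> span F"
    and B: "finite B" "f ` B \<subseteq> H" "H \<subseteq> span (f ` B \<union> K)"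
    and indep: "\<And>c. (\<Sum>i\<in>B. c i *s f i) \<in> K \<Longrightarrow> \<forall>i\<in>B. c i = 0"
  shows "dim H = card B + dim K"
proof -
  obtain C where C: "C \<subseteq> K" "independent C" "K \<subseteq> span C" "card C = dim K"
    using basis_exists by blast
  have "finite C"
    using independent_span_bound[OF H(1) C(2)] C(1) K(2) H(2) by blast
  have "f ` B \<union> K \<subseteq> span (f ` B \<union> C)"
    using C(3) span_mono[of C "f ` B \<union> C"] span_base[of _ "f ` B \<union> C"] by blast
  then have "H \<subseteq> span (f ` B \<union> C)"
    using B(3) span_minimal[OF _ subspace_span] by blast
  then have "card (f ` B \<union> C) = dim H"
    using B(2) C(1) K(2) independent_Un_if_independent_modulo[OF K(1) B(1) indep C(2) \<open>finite C\<close> C(1)]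
    by (intro basis_card_eq_dim) auto
  moreover have "card (f ` B \<union> C) = card B + card C"
    using image_disjoint_if_independent_modulo[OF B(1) indep] C(1) \<open>finite C\<close> B(1)
      card_image[OF inj_on_if_independent_modulo[OF K(1) B(1) indep]]
    by (subst card_Un_disjoint) auto
  ultimately show ?thesis
    using C(4) by simp
qed

end

lemma dimA_eq_card:
  assumes "basis_mod s G Gi n B f"
  shows "dimA s G Gi n = card B"
proof -
  have "nc.dim (homog s n) = card B + nc.dim (relideal s G Gi \<inter> homog s n)"
  proof (rule nc.dim_eq_card_add_dim_if_independent_modulo)
    show "nc.subspace (relideal s G Gi \<inter> homog s n)"
      by (intro nc.subspace_inter subspace_relideal subspace_homog)
    show "homog s n \<subseteq> nc.span (mono ` words s n)"
      by (rule homog_subset_span_mono)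
  qed (use assms in \<open>auto simp: basis_mod_def\<close>)
  then show ?thesis
    by (simp add: dimA_def)
qed

lemma homog_subset_span_if_reduces:
  assumes homog: "f ` B \<subseteq> homog s n"
    and reduce: "\<And>w. w \<in> words s n \<Longrightarrow> \<exists>x\<in>nc.span (f ` B). mono w - x \<in> relideal s G Gi"
  shows "homog s n \<subseteq> nc.span (f ` B \<union> (relideal s G Gi \<inter> homog s n))"
proof -
  let ?T = "nc.span (f ` B \<union> (relideal s G Gi \<inter> homog s n))"
  have span_homog: "nc.span (f ` B) \<subseteq> homog s n"
    using homog by (intro nc.span_minimal subspace_homog)
  have "mono w \<in> ?T" if w: "w \<in> words s n" for w
  proof -
    obtain x where x: "x \<in> nc.span (f ` B)" "mono w - x \<in> relideal s G Gi"
      using reduce[OF w] by blast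
    have "mono w - x \<in> homog s n"
      using x(1) span_homog mono_homog_words[OF w] by (intro homog_diff) auto
    then have "mono w - x \<in> ?T"
      using x(2) by (intro nc.span_base) auto
    moreover have "x \<in> ?T"
      using x(1) nc.span_mono[of "f ` B"] by blast
    ultimately have "x + (mono w - x) \<in> ?T"
      by (intro nc.span_add)
    then show ?thesis
      by simp
  qed
  then have "nc.span (mono ` words s n) \<subseteq> ?T"
    by (intro nc.span_minimal nc.subspace_span) auto
  then show ?thesis
    using homog_subset_span_mono by blast
qed

lemma basis_modI:
  assumes "finite B" and homog: "f ` B \<subseteq> homog s n"
    and reduce: "\<And>w. w \<in> words s n \<Longrightarrow> \<exists>x\<in>nc.span (f ` B). mono w - x \<in> relideal s G Gi"
    and annihilates: "\<And>j. j \<in> B \<Longrightarrow> annihilates_relations s G Gi n (a j)"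
    and dual: "\<And>i j. i \<in> B \<Longrightarrow> j \<in> B \<Longrightarrow> pairing s n (a j) (f i) = of_bool (i = j)"
  shows "basis_mod s G Gi n B f"
  unfolding basis_mod_def
proof (intro conjI allI impI ballI)
  show "homog s n \<subseteq> nc.span (f ` B \<union> (relideal s G Gi \<inter> homog s n))"
    by (rule homog_subset_span_if_reduces[OF homog reduce])
next
  fix c j assume "(\<Sum>i\<in>B. cscale (c i) (f i)) \<in> relideal s G Gi" and j: "j \<in> B"
  then have "0 = pairing s n (a j) (\<Sum>i\<in>B. cscale (c i) (f i))"
    using pairing_relideal annihilates by metis
  also have "\<dots> = (\<Sum>i\<in>B. c i * of_bool (i = j))"
    using j by (simp add: pairing_sum pairing_cscale dual)
  also have "\<dots> = c j"
    using j \<open>finite B\<close> by (simp add: if_distrib cong: if_cong)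
  finally show "c j = 0"
    by simp
qed (use assms in auto)

lemma basis_mod_mono_low_degree:
  assumes "n < 3" and word: "bij_betw word B (words s n)"
  shows "basis_mod s G Gi n B (\<lambda>i. mono (word i))"
proof (rule basis_modI[where a = "\<lambda>j w. of_bool (w = word j)"])
  show "finite B"
    using bij_betw_finite[OF word] by simp
  show "(\<lambda>i. mono (word i)) ` B \<subseteq> homog s n"
    by (intro image_subsetI mono_homog_words bij_betw_apply[OF word])
  show "\<exists>x\<in>nc.span ((\<lambda>i. mono (word i)) ` B). mono w - x \<in> relideal s G Gi"
    if "w \<in> words s n" for w
  proof -
    have "w \<in> word ` B"
      using that bij_betw_imp_surj_on[OF word] by simp
    then obtain i where "i \<in> B" "w = word i"
      by blast
    then show ?thesis
      using relideal_zero by (intro bexI[of _ "mono w"] nc.span_base) auto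
  qed
  show "annihilates_relations s G Gi n (\<lambda>w. of_bool (w = word j))" for j
    using assms(1) by (rule annihilates_relations_low_degree)
  show "pairing s n (\<lambda>w. of_bool (w = word j)) (mono (word i)) = of_bool (i = j)"
    if "i \<in> B" "j \<in> B" for i j
  proof -
    have "word i \<in> words s n"
      by (rule bij_betw_apply[OF word that(1)])
    then show ?thesis
      using that inj_on_eq_iff[OF bij_betw_imp_inj_on[OF word]] by (simp add: pairing_mono)
  qed
qed

section \<open>Reductions modulo the relations\<close>

lemma sum_sum_cscale_combination:
  "(\<Sum>a\<in>A. \<Sum>b\<in>A. cscale (c a b) (cscale k (cscale (x a b) (P a b) + cscale (y a b) (Q a b)
      - cscale (2 * z a b) (R a b))))
   = cscale k ((\<Sum>a\<in>A. \<Sum>b\<in>A. cscale (c a b) (cscale (x a b) (P a b)))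
      + (\<Sum>a\<in>A. \<Sum>b\<in>A. cscale (c a b) (cscale (y a b) (Q a b)))
      - cscale 2 (\<Sum>a\<in>A. \<Sum>b\<in>A. cscale (c a b) (cscale (z a b) (R a b))))"
  by (simp add: fun_eq_iff sum_ncpoly_apply sum_distrib_left sum.distrib sum_subtractf algebra_simps)

lemma sum_sum_combination:
  "(\<Sum>a\<in>A. \<Sum>b\<in>A. (c a b :: complex) * (x a b + y a b - 2 * z a b))
   = (\<Sum>a\<in>A. \<Sum>b\<in>A. c a b * x a b) + (\<Sum>a\<in>A. \<Sum>b\<in>A. c a b * y a b)
      - 2 * (\<Sum>a\<in>A. \<Sum>b\<in>A. c a b * z a b)"
  by (simp add: sum_distrib_left sum.distrib sum_subtractf algebra_simps)

lemma sum_sum_cscale_cscale: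
  "(\<Sum>a\<in>A. \<Sum>b\<in>A. cscale (c a b) (cscale k (V a b))) = cscale k (\<Sum>a\<in>A. \<Sum>b\<in>A. cscale (c a b) (V a b))"
  by (simp add: fun_eq_iff sum_ncpoly_apply sum_distrib_left mult_ac)

locale inverse_metric =
  fixes s :: nat and G Gi :: "nat \<Rightarrow> nat \<Rightarrow> real"
  assumes s_ge_1: "s \<ge> 1"
    and G_sym: "\<forall>\<mu>\<le>s. \<forall>\<nu>\<le>s. G \<mu> \<nu> = G \<nu> \<mu>"
    and G_Gi: "\<forall>\<mu>\<le>s. \<forall>\<nu>\<le>s. (\<Sum>\<alpha>\<le>s. G \<mu> \<alpha> * Gi \<alpha> \<nu>) = (if \<mu> = \<nu> then 1 else 0)"
    and Gi_G: "\<forall>\<mu>\<le>s. \<forall>\<nu>\<le>s. (\<Sum>\<alpha>\<le>s. Gi \<mu> \<alpha> * G \<alpha> \<nu>) = (if \<mu> = \<nu> then 1 else 0)"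
begin

abbreviation g_lo :: "nat \<Rightarrow> nat \<Rightarrow> complex" where "g_lo a b \<equiv> complex_of_real (G a b)"
abbreviation g_up :: "nat \<Rightarrow> nat \<Rightarrow> complex" where "g_up a b \<equiv> complex_of_real (Gi a b)"
abbreviation g :: ncpoly where "g \<equiv> gel s G"

lemma s_nonzero: "of_nat s \<noteq> (0 :: complex)"
  using s_ge_1 by simp

lemma s_plus_1_nonzero: "of_nat s + 1 \<noteq> (0 :: complex)"
  by (metis of_nat_Suc of_nat_eq_0_iff add.commute nat.distinct(1))

lemma g_lo_sym: "a \<le> s \<Longrightarrow> b \<le> s \<Longrightarrow> g_lo a b = g_lo b a"
  using G_sym by simp

lemma g_lo_g_up: "a \<le> s \<Longrightarrow> b \<le> s \<Longrightarrow> (\<Sum>c\<le>s. g_lo a c * g_up c b) = of_bool (a = b)"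
  using G_Gi by (simp flip: of_real_mult of_real_sum)

lemma g_up_g_lo: "a \<le> s \<Longrightarrow> b \<le> s \<Longrightarrow> (\<Sum>c\<le>s. g_up a c * g_lo c b) = of_bool (a = b)"
  using Gi_G by (simp flip: of_real_mult of_real_sum)

lemma g_up_sym:
  assumes "a \<le> s" "b \<le> s"
  shows "g_up a b = g_up b a"
proof -
  have delta: "(\<Sum>c\<le>s. g_up c a * g_lo c x) = of_bool (x = a)" if "x \<le> s" for x
  proof -
    have "(\<Sum>c\<le>s. g_up c a * g_lo c x) = (\<Sum>c\<le>s. g_lo x c * g_up c a)"
      using that by (intro sum.cong) (auto simp: g_lo_sym)
    then show ?thesis
      using that assms g_lo_g_up by simp
  qed
  have "g_up a b = (\<Sum>x\<le>s. of_bool (x = a) * g_up x b)"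
    using assms by simp
  also have "\<dots> = (\<Sum>x\<le>s. (\<Sum>c\<le>s. g_up c a * g_lo c x) * g_up x b)"
    by (simp add: delta)
  also have "\<dots> = (\<Sum>c\<le>s. g_up c a * (\<Sum>x\<le>s. g_lo c x * g_up x b))"
    unfolding sum_distrib_left sum_distrib_right mult.assoc by (rule sum.swap)
  also have "\<dots> = g_up b a"
    using assms by (simp add: g_lo_g_up)
  finally show ?thesis .
qed

lemma contract_left: "n \<le> s \<Longrightarrow> (\<Sum>a\<le>s. \<Sum>b\<le>s. g_lo a b * (g_up n a * F b)) = F n"
proof -
  assume n: "n \<le> s"
  have "(\<Sum>a\<le>s. \<Sum>b\<le>s. g_lo a b * (g_up n a * F b)) = (\<Sum>b\<le>s. (\<Sum>a\<le>s. g_up n a * g_lo a b) * F b)"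
    unfolding sum_distrib_right by (subst sum.swap) (simp add: mult_ac)
  also have "\<dots> = F n"
    using n by (simp add: g_up_g_lo)
  finally show ?thesis .
qed

lemma contract_right: "n \<le> s \<Longrightarrow> (\<Sum>a\<le>s. \<Sum>b\<le>s. g_lo a b * (g_up b n * F a)) = F n"
proof -
  assume n: "n \<le> s"
  have "(\<Sum>a\<le>s. \<Sum>b\<le>s. g_lo a b * (g_up b n * F a)) = (\<Sum>a\<le>s. (\<Sum>b\<le>s. g_lo a b * g_up b n) * F a)"
    by (simp add: sum_distrib_left sum_distrib_right mult_ac)
  also have "\<dots> = F n"
    using n by (simp add: g_lo_g_up)
  finally show ?thesis .
qed

lemma contract_left': "n \<le> s \<Longrightarrow> (\<Sum>a\<le>s. \<Sum>b\<le>s. g_lo a b * (g_up a n * F b)) = F n"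
  using contract_left[of n F] by (auto simp: g_up_sym intro!: sum.cong)

lemma contract_right': "n \<le> s \<Longrightarrow> (\<Sum>a\<le>s. \<Sum>b\<le>s. g_lo a b * (g_up n b * F a)) = F n"
  using contract_right[of n F] by (auto simp: g_up_sym intro!: sum.cong)

lemma contract_trace: "(\<Sum>a\<le>s. \<Sum>b\<le>s. g_lo a b * (g_up a b * z)) = of_nat (s + 1) * z"
proof -
  have "(\<Sum>a\<le>s. \<Sum>b\<le>s. g_lo a b * (g_up a b * z)) = (\<Sum>a\<le>s. (\<Sum>b\<le>s. g_lo a b * g_up b a) * z)"
    by (auto simp: sum_distrib_left sum_distrib_right mult_ac g_up_sym intro!: sum.cong)
  then show ?thesis
    by (simp add: g_lo_g_up)
qed

lemma cscale_contract_left: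
  "n \<le> s \<Longrightarrow> (\<Sum>a\<le>s. \<Sum>b\<le>s. cscale (g_lo a b) (cscale (g_up n a) (V b))) = V n"
  by (rule ext, unfold sum_ncpoly_apply cscale_apply) (erule contract_left)

lemma cscale_contract_right:
  "n \<le> s \<Longrightarrow> (\<Sum>a\<le>s. \<Sum>b\<le>s. cscale (g_lo a b) (cscale (g_up b n) (V a))) = V n"
  by (rule ext, unfold sum_ncpoly_apply cscale_apply) (erule contract_right)

lemma cscale_contract_left':
  "n \<le> s \<Longrightarrow> (\<Sum>a\<le>s. \<Sum>b\<le>s. cscale (g_lo a b) (cscale (g_up a n) (V b))) = V n"
  by (rule ext, unfold sum_ncpoly_apply cscale_apply) (erule contract_left')

lemma cscale_contract_right':
  "n \<le> s \<Longrightarrow> (\<Sum>a\<le>s. \<Sum>b\<le>s. cscale (g_lo a b) (cscale (g_up n b) (V a))) = V n"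
  by (rule ext, unfold sum_ncpoly_apply cscale_apply) (erule contract_right')

lemma cscale_contract_trace:
  "(\<Sum>a\<le>s. \<Sum>b\<le>s. cscale (g_lo a b) (cscale (g_up a b) V)) = cscale (of_nat (s + 1)) V"
  by (rule ext, unfold sum_ncpoly_apply cscale_apply) (rule contract_trace)

definition cong_rel :: "ncpoly \<Rightarrow> ncpoly \<Rightarrow> bool" (infix "\<approx>" 50) where
  "p \<approx> q \<longleftrightarrow> p - q \<in> relideal s G Gi"

lemma cong_refl [simp]: "p \<approx> p"
  by (simp add: cong_rel_def relideal_zero)

lemma cong_0_iff: "p \<approx> 0 \<longleftrightarrow> p \<in> relideal s G Gi"
  by (simp add: cong_rel_def)

lemma cong_sym: "p \<approx> q \<Longrightarrow> q \<approx> p"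
  unfolding cong_rel_def using relideal_cscale[of "p - q" s G Gi "-1"]
  by (simp add: fun_eq_iff)

lemma cong_trans [trans]: "p \<approx> q \<Longrightarrow> q \<approx> r \<Longrightarrow> p \<approx> r"
  unfolding cong_rel_def using relideal_add[of "p - q" s G Gi "q - r"] by simp

text \<open>Without these two rules, chains mixing \<open>=\<close> and \<open>\<approx>\<close> fall back on the general substitution
  rules, whose higher-order unification does not terminate in practice on the terms below.\<close>

lemma eq_cong_trans [trans]: "p = q \<Longrightarrow> q \<approx> r \<Longrightarrow> p \<approx> r"
  by simp

lemma cong_eq_trans [trans]: "p \<approx> q \<Longrightarrow> q = r \<Longrightarrow> p \<approx> r"
  by simp

lemma cong_add: "p \<approx> q \<Longrightarrow> p' \<approx> q' \<Longrightarrow> p + p' \<approx> q + q'"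
  unfolding cong_rel_def using relideal_add[of "p - q" s G Gi "p' - q'"] by (simp add: algebra_simps)

lemma cong_diff: "p \<approx> q \<Longrightarrow> p' \<approx> q' \<Longrightarrow> p - p' \<approx> q - q'"
  unfolding cong_rel_def using relideal_diff[of "p - q" s G Gi "p' - q'"] by (simp add: algebra_simps)

lemma cong_cscale: "p \<approx> q \<Longrightarrow> cscale c p \<approx> cscale c q"
  unfolding cong_rel_def using relideal_cscale[of "p - q" s G Gi c]
  by (simp add: cscale_def right_diff_distrib fun_diff_def)

lemma cong_sum: "(\<And>i. i \<in> A \<Longrightarrow> f i \<approx> h i) \<Longrightarrow> (\<Sum>i\<in>A. f i) \<approx> (\<Sum>i\<in>A. h i)"
  unfolding cong_rel_def using relideal_sum[of A "\<lambda>i. f i - h i"] by (simp add: sum_subtractf)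

lemma cong_ncmult_left: "r \<in> homog s k \<Longrightarrow> p \<approx> q \<Longrightarrow> r ** p \<approx> r ** q"
  unfolding cong_rel_def using homog_ncmult_relideal by (fastforce simp: ncmult_diff_right)

lemma cong_ncmult_right: "r \<in> homog s k \<Longrightarrow> p \<approx> q \<Longrightarrow> p ** r \<approx> q ** r"
  unfolding cong_rel_def using relideal_ncmult_homog by (fastforce simp: ncmult_diff_left)

definition cubic_rhs :: "nat \<Rightarrow> nat \<Rightarrow> nat \<Rightarrow> ncpoly" where
  "cubic_rhs l m n = cscale (1 / of_nat s)
     (cscale (g_up l m) (theta n ** g) + cscale (g_up m n) (theta l ** g) - cscale (2 * g_up l n) (theta m ** g))"

lemma rel_eq_cubic_rhs: "rel s G Gi l m n = theta l ** theta m ** theta n - cubic_rhs l m n"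
  unfolding rel_def cubic_rhs_def by (simp add: ncmult_add_left ncmult_diff_left ncmult_cscale_left)

lemma cubic_cong: "l \<le> s \<Longrightarrow> m \<le> s \<Longrightarrow> n \<le> s \<Longrightarrow> theta l ** theta m ** theta n \<approx> cubic_rhs l m n"
  unfolding cong_rel_def rel_eq_cubic_rhs[symmetric] by (rule rel_in_relideal)

lemma theta_ncmult_cubic_rhs:
  "theta y ** cubic_rhs l m k = cscale (1 / of_nat s) (cscale (g_up l m) (theta y ** theta k ** g)
     + cscale (g_up m k) (theta y ** theta l ** g) - cscale (2 * g_up l k) (theta y ** theta m ** g))"
  by (simp only: cubic_rhs_def ncmult_add_right ncmult_diff_right ncmult_cscale_right ncmult_assoc[symmetric])

lemma cubic_rhs_ncmult_theta:
  "cubic_rhs l m k ** theta y = cscale (1 / of_nat s) (cscale (g_up l m) (theta k ** g ** theta y)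
     + cscale (g_up m k) (theta l ** g ** theta y) - cscale (2 * g_up l k) (theta m ** g ** theta y))"
  by (simp only: cubic_rhs_def ncmult_add_left ncmult_diff_left ncmult_cscale_left)

lemma ncmult_gel: "p ** g = (\<Sum>a\<le>s. \<Sum>b\<le>s. cscale (g_lo a b) (p ** theta a ** theta b))"
  by (simp add: gel_def ncmult_sum_right ncmult_cscale_right ncmult_assoc)

lemma gel_theta_cong:
  assumes n: "n \<le> s"
  shows "g ** theta n \<approx> theta n ** g"
proof -
  have "g ** theta n = (\<Sum>l\<le>s. \<Sum>m\<le>s. cscale (g_lo l m) (theta l ** theta m ** theta n))"
    by (simp add: gel_def ncmult_sum_left ncmult_cscale_left)
  also have "\<dots> \<approx> (\<Sum>l\<le>s. \<Sum>m\<le>s. cscale (g_lo l m) (cubic_rhs l m n))"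
    by (intro cong_sum cong_cscale cubic_cong n) auto
  also have "\<dots> = cscale (1 / of_nat s)
      (cscale (of_nat (s + 1)) (theta n ** g) + theta n ** g - cscale 2 (theta n ** g))"
    unfolding cubic_rhs_def sum_sum_cscale_combination
    by (simp only: cscale_contract_trace cscale_contract_left'[OF n] cscale_contract_right[OF n])
  also have "\<dots> = theta n ** g"
    using s_nonzero by (simp add: fun_eq_iff field_simps)
  finally show ?thesis .
qed

lemma theta_gel_theta_cong:
  assumes x: "x \<le> s" and y: "y \<le> s"
  shows "theta x ** g ** theta y \<approx> theta x ** theta y ** g"
proof -
  have "theta x ** g ** theta y = theta x ** (g ** theta y)"
    by (simp add: ncmult_assoc)
  also have "\<dots> \<approx> theta x ** (theta y ** g)"
    by (rule cong_ncmult_left[OF theta_homog[OF x] gel_theta_cong[OF y]])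
  also have "\<dots> = theta x ** theta y ** g"
    by (simp add: ncmult_assoc)
  finally show ?thesis .
qed

lemma sum_theta_theta_gel: "(\<Sum>a\<le>s. \<Sum>b\<le>s. cscale (g_lo a b) (theta a ** theta b ** g)) = g ** g"
  by (simp add: gel_def[of s G] ncmult_sum_left ncmult_cscale_left)

lemma sum_theta_gel_theta_cong: "(\<Sum>a\<le>s. \<Sum>b\<le>s. cscale (g_lo a b) (theta a ** g ** theta b)) \<approx> g ** g"
proof -
  have "(\<Sum>a\<le>s. \<Sum>b\<le>s. cscale (g_lo a b) (theta a ** g ** theta b))
      \<approx> (\<Sum>a\<le>s. \<Sum>b\<le>s. cscale (g_lo a b) (theta a ** theta b ** g))"
    by (intro cong_sum cong_cscale theta_gel_theta_cong) auto
  then show ?thesis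
    by (simp only: sum_theta_theta_gel)
qed

lemma theta_theta_gel_cong_swap:
  assumes x: "x \<le> s" and y: "y \<le> s"
  shows "theta x ** theta y ** g
    \<approx> cscale (1 / of_nat s) (cscale (g_up x y) (g ** g) + theta x ** theta y ** g - cscale 2 (theta y ** theta x ** g))"
proof -
  have "theta x ** theta y ** g = (\<Sum>a\<le>s. \<Sum>b\<le>s. cscale (g_lo a b) (theta x ** theta y ** theta a ** theta b))"
    by (rule ncmult_gel)
  also have "\<dots> \<approx> (\<Sum>a\<le>s. \<Sum>b\<le>s. cscale (g_lo a b) (cubic_rhs x y a ** theta b))"
    by (intro cong_sum cong_cscale cong_ncmult_right[OF theta_homog] cubic_cong x y) auto
  also have "\<dots> = cscale (1 / of_nat s) (cscale (g_up x y) (\<Sum>a\<le>s. \<Sum>b\<le>s. cscale (g_lo a b) (theta a ** g ** theta b))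
      + theta x ** g ** theta y - cscale 2 (theta y ** g ** theta x))"
    by (simp only: cubic_rhs_ncmult_theta sum_sum_cscale_combination
        sum_sum_cscale_cscale cscale_contract_left[OF x] cscale_contract_left[OF y])
  also have "\<dots> \<approx> cscale (1 / of_nat s) (cscale (g_up x y) (g ** g) + theta x ** theta y ** g - cscale 2 (theta y ** theta x ** g))"
    by (intro cong_cscale cong_add cong_diff sum_theta_gel_theta_cong theta_gel_theta_cong x y)
  finally show ?thesis .
qed

text \<open>Reduce \<open>\<Sum> g\<^sub>b\<^sub>d \<theta>\<^sup>a\<theta>\<^sup>b\<theta>\<^sup>c\<theta>\<^sup>d\<close> once via its last three and once via its first three letters.\<close>
lemma theta_theta_gel_cong_middle:
  assumes a: "a \<le> s" and c: "c \<le> s"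
  shows "cscale (-2) (theta a ** theta c ** g)
    \<approx> cscale (1 / of_nat s) (theta c ** theta a ** g + theta a ** theta c ** g - cscale 2 (cscale (g_up a c) (g ** g)))"
proof -
  define Z where "Z = (\<Sum>b\<le>s. \<Sum>d\<le>s. cscale (g_lo b d) (theta a ** theta b ** theta c ** theta d))"
  have "Z = (\<Sum>b\<le>s. \<Sum>d\<le>s. cscale (g_lo b d) (theta a ** (theta b ** theta c ** theta d)))"
    unfolding Z_def by (simp only: ncmult_assoc)
  also have "\<dots> \<approx> (\<Sum>b\<le>s. \<Sum>d\<le>s. cscale (g_lo b d) (theta a ** cubic_rhs b c d))"
    by (intro cong_sum cong_cscale cong_ncmult_left[OF theta_homog[OF a]] cubic_cong c) auto
  also have "\<dots> = cscale (1 / of_nat s) (theta a ** theta c ** g + theta a ** theta c ** g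
      - cscale 2 (cscale (of_nat (s + 1)) (theta a ** theta c ** g)))"
    by (simp only: theta_ncmult_cubic_rhs sum_sum_cscale_combination cscale_contract_left'[OF c] cscale_contract_right'[OF c] cscale_contract_trace)
  also have "\<dots> = cscale (-2) (theta a ** theta c ** g)"
    using s_nonzero by (simp add: fun_eq_iff field_simps)
  finally have first: "Z \<approx> cscale (-2) (theta a ** theta c ** g)" .
  have "Z \<approx> (\<Sum>b\<le>s. \<Sum>d\<le>s. cscale (g_lo b d) (cubic_rhs a b c ** theta d))"
    unfolding Z_def by (intro cong_sum cong_cscale cong_ncmult_right[OF theta_homog] cubic_cong a c) auto
  also have "\<dots> = cscale (1 / of_nat s) (theta c ** g ** theta a + theta a ** g ** theta c
      - cscale 2 (cscale (g_up a c) (\<Sum>b\<le>s. \<Sum>d\<le>s. cscale (g_lo b d) (theta b ** g ** theta d))))"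
    by (simp only: cubic_rhs_ncmult_theta sum_sum_cscale_combination
        sum_sum_cscale_cscale cscale_contract_left'[OF c] cscale_contract_left[OF a])
  also have "\<dots> \<approx> cscale (1 / of_nat s) (theta c ** theta a ** g + theta a ** theta c ** g - cscale 2 (cscale (g_up a c) (g ** g)))"
    by (intro cong_cscale cong_add cong_diff sum_theta_gel_theta_cong theta_gel_theta_cong a c)
  finally show ?thesis
    using cong_trans[OF cong_sym[OF first]] by blast
qed

lemma theta_theta_gel_cong:
  assumes a: "a \<le> s" and c: "c \<le> s"
  shows "theta a ** theta c ** g \<approx> cscale (g_up a c / of_nat (s + 1)) (g ** g)"
proof -
  let ?M = "theta a ** theta c ** g" and ?M' = "theta c ** theta a ** g" and ?P = "g ** g"
  \<comment> \<open>The multipliers \<open>\<alpha>\<close> and \<open>2 \<alpha>\<close> eliminate \<open>\<theta>\<^sup>c\<theta>\<^sup>a \<^bold>g\<close> between the two relations.\<close>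
  define \<alpha> :: complex where "\<alpha> = - of_nat s / (3 * (of_nat s + 1))"
  have "cscale \<alpha> ?M + cscale (2 * \<alpha>) (cscale (-2) ?M)
    \<approx> cscale \<alpha> (cscale (1 / of_nat s) (cscale (g_up a c) ?P + ?M - cscale 2 ?M'))
      + cscale (2 * \<alpha>) (cscale (1 / of_nat s) (?M' + ?M - cscale 2 (cscale (g_up a c) ?P)))"
    by (intro cong_add cong_cscale theta_theta_gel_cong_swap theta_theta_gel_cong_middle a c)
  then have "cscale \<alpha> ?M + cscale (2 * \<alpha>) (cscale (-2) ?M)
      - (cscale \<alpha> (cscale (1 / of_nat s) (cscale (g_up a c) ?P + ?M - cscale 2 ?M'))
      + cscale (2 * \<alpha>) (cscale (1 / of_nat s) (?M' + ?M - cscale 2 (cscale (g_up a c) ?P))))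
      \<approx> 0"
    by (simp add: cong_rel_def)
  moreover have "?M - cscale (g_up a c / of_nat (s + 1)) ?P
      = cscale \<alpha> ?M + cscale (2 * \<alpha>) (cscale (-2) ?M)
      - (cscale \<alpha> (cscale (1 / of_nat s) (cscale (g_up a c) ?P + ?M - cscale 2 ?M'))
      + cscale (2 * \<alpha>) (cscale (1 / of_nat s) (?M' + ?M - cscale 2 (cscale (g_up a c) ?P))))"
  proof (rule ext)
    fix w
    have u: "of_nat s * (1 / of_nat s) = (1 :: complex)" and v: "(of_nat s + 1) * (1 / (of_nat s + 1)) = (1 :: complex)"
      using s_nonzero s_plus_1_nonzero by simp_all
    have "\<alpha> = - of_nat s * (1 / (of_nat s + 1)) / 3" "g_up a c / of_nat (s + 1) = g_up a c * (1 / (of_nat s + 1))"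
      by (simp_all add: \<alpha>_def)
    then show "(?M - cscale (g_up a c / of_nat (s + 1)) ?P) w
      = (cscale \<alpha> ?M + cscale (2 * \<alpha>) (cscale (-2) ?M)
      - (cscale \<alpha> (cscale (1 / of_nat s) (cscale (g_up a c) ?P + ?M - cscale 2 ?M'))
      + cscale (2 * \<alpha>) (cscale (1 / of_nat s) (?M' + ?M - cscale 2 (cscale (g_up a c) ?P))))) w"
      unfolding minus_apply plus_fun_apply cscale_apply using u v by algebra
  qed
  ultimately show ?thesis
    by (simp add: cong_rel_def)
qed

definition quartic_coeff :: "nat \<Rightarrow> nat \<Rightarrow> nat \<Rightarrow> nat \<Rightarrow> complex" where
  "quartic_coeff a b c d =
     (g_up a b * g_up c d + g_up a d * g_up b c - 2 * (g_up a c * g_up b d)) / (of_nat s * of_nat (s + 1))"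

lemma quartic_cong:
  assumes "a \<le> s" "b \<le> s" "c \<le> s" "d \<le> s"
  shows "theta a ** theta b ** theta c ** theta d \<approx> cscale (quartic_coeff a b c d) (g ** g)"
proof -
  let ?q = "\<lambda>x y. g_up x y / of_nat (s + 1)"
  have "theta a ** theta b ** theta c ** theta d = theta a ** (theta b ** theta c ** theta d)"
    by (simp only: ncmult_assoc)
  also have "\<dots> \<approx> theta a ** cubic_rhs b c d"
    by (intro cong_ncmult_left[OF theta_homog] cubic_cong assms)
  also have "\<dots> = cscale (1 / of_nat s) (cscale (g_up b c) (theta a ** theta d ** g)
      + cscale (g_up c d) (theta a ** theta b ** g) - cscale (2 * g_up b d) (theta a ** theta c ** g))"
    by (rule theta_ncmult_cubic_rhs)
  also have "\<dots> \<approx> cscale (1 / of_nat s) (cscale (g_up b c) (cscale (?q a d) (g ** g))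
      + cscale (g_up c d) (cscale (?q a b) (g ** g)) - cscale (2 * g_up b d) (cscale (?q a c) (g ** g)))"
    by (intro cong_cscale cong_add cong_diff theta_theta_gel_cong assms)
  also have "\<dots> = cscale (quartic_coeff a b c d) (g ** g)"
    by (simp add: fun_eq_iff quartic_coeff_def add_divide_distrib diff_divide_distrib algebra_simps)
  finally show ?thesis .
qed

lemma theta_gel_gel_in_relideal:
  assumes a: "a \<le> s"
  shows "theta a ** g ** g \<in> relideal s G Gi"
proof -
  let ?Y = "theta a ** g ** g"
  have "?Y = (\<Sum>d\<le>s. \<Sum>e\<le>s. cscale (g_lo d e) (theta a ** g ** theta d ** theta e))"
    by (rule ncmult_gel)
  also have "\<dots> \<approx> (\<Sum>d\<le>s. \<Sum>e\<le>s. cscale (g_lo d e) (theta a ** theta d ** g ** theta e))"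
    by (intro cong_sum cong_cscale cong_ncmult_right[OF theta_homog] theta_gel_theta_cong a) auto
  also have "\<dots> \<approx> (\<Sum>d\<le>s. \<Sum>e\<le>s. cscale (g_lo d e) (cscale (g_up a d / of_nat (s + 1)) (g ** g) ** theta e))"
    by (intro cong_sum cong_cscale cong_ncmult_right[OF theta_homog] theta_theta_gel_cong a) auto
  also have "\<dots> = cscale (1 / of_nat (s + 1)) (\<Sum>d\<le>s. \<Sum>e\<le>s. cscale (g_lo d e) (cscale (g_up a d) (g ** g ** theta e)))"
    by (simp add: fun_eq_iff sum_ncpoly_apply ncmult_cscale_left sum_distrib_left mult_ac)
  also have "\<dots> = cscale (1 / of_nat (s + 1)) (g ** (g ** theta a))"
    by (simp only: cscale_contract_left[OF a] ncmult_assoc)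
  also have "\<dots> \<approx> cscale (1 / of_nat (s + 1)) (g ** (theta a ** g))"
    by (intro cong_cscale cong_ncmult_left[OF gel_homog] gel_theta_cong a)
  also have "\<dots> = cscale (1 / of_nat (s + 1)) ((g ** theta a) ** g)"
    by (simp only: ncmult_assoc)
  also have "\<dots> \<approx> cscale (1 / of_nat (s + 1)) ?Y"
    by (intro cong_cscale cong_ncmult_right[OF gel_homog] gel_theta_cong a)
  finally have "cscale (of_nat (s + 1) / of_nat s) (?Y - cscale (1 / of_nat (s + 1)) ?Y) \<in> relideal s G Gi"
    unfolding cong_rel_def by (rule relideal_cscale)
  moreover have "cscale (of_nat (s + 1) / of_nat s) (?Y - cscale (1 / of_nat (s + 1)) ?Y) = ?Y"
    using s_nonzero s_plus_1_nonzero by (simp add: fun_eq_iff field_simps)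
  ultimately show ?thesis
    by simp
qed

lemma mono_in_relideal_length_5:
  assumes w: "w \<in> words s 5"
  shows "mono w \<in> relideal s G Gi"
proof -
  obtain a b c d e where w_eq: "w = [a, b, c, d, e]"
    using w by (auto simp: words_def numeral_eq_Suc length_Suc_conv)
  have le: "a \<le> s" "b \<le> s" "c \<le> s" "d \<le> s" "e \<le> s"
    using w by (auto simp: words_def w_eq)
  have "mono w = theta a ** (theta b ** theta c ** theta d ** theta e)"
    by (simp add: w_eq mono_ncmult_mono theta_def)
  also have "\<dots> \<approx> theta a ** cscale (quartic_coeff b c d e) (g ** g)"
    by (intro cong_ncmult_left[OF theta_homog] quartic_cong le)
  also have "\<dots> = cscale (quartic_coeff b c d e) (theta a ** g ** g)"
    by (simp add: ncmult_cscale_right ncmult_assoc)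
  also have "\<dots> \<approx> 0"
    unfolding cong_0_iff by (intro relideal_cscale theta_gel_gel_in_relideal le)
  finally show ?thesis
    unfolding cong_0_iff .
qed

lemma homog_subset_relideal:
  assumes n: "n \<ge> 5"
  shows "homog s n \<subseteq> relideal s G Gi"
proof -
  have "mono w \<in> relideal s G Gi" if w: "w \<in> words s n" for w
  proof -
    have "take 5 w \<in> words s 5" "set (drop 5 w) \<subseteq> {..s}"
      using w n by (auto simp: words_def dest: in_set_takeD in_set_dropD)
    then have "mono (take 5 w) ** mono (drop 5 w) \<in> relideal s G Gi"
      by (intro relideal_ncmult_mono mono_in_relideal_length_5)
    then show ?thesis
      by (simp add: mono_ncmult_mono)
  qed
  then have "nc.span (mono ` words s n) \<subseteq> relideal s G Gi"
    by (intro nc.span_minimal subspace_relideal) auto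
  then show ?thesis
    using homog_subset_span_mono by blast
qed

section \<open>Dual functionals in degrees 3 and 4\<close>

lemma theta_gel_eq_sum_mono: "theta k ** g = (\<Sum>a\<le>s. \<Sum>b\<le>s. cscale (g_lo a b) (mono [k, a, b]))"
  by (simp add: gel_def ncmult_sum_right ncmult_cscale_right theta_def mono_ncmult_mono)

lemma theta_theta_gel_eq_sum_mono:
  "theta x ** theta k ** g = (\<Sum>a\<le>s. \<Sum>b\<le>s. cscale (g_lo a b) (mono [x, k, a, b]))"
  by (simp add: gel_def ncmult_sum_right ncmult_cscale_right theta_def mono_ncmult_mono)

lemma theta_gel_theta_eq_sum_mono:
  "theta k ** g ** theta x = (\<Sum>a\<le>s. \<Sum>b\<le>s. cscale (g_lo a b) (mono [k, a, b, x]))"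
  by (simp add: gel_def ncmult_sum_right ncmult_cscale_right ncmult_sum_left ncmult_cscale_left theta_def
      mono_ncmult_mono)

lemma pairing_cubic_rhs:
  "pairing s n a (cubic_rhs l m k) = (g_up l m * pairing s n a (theta k ** g)
     + g_up m k * pairing s n a (theta l ** g) - 2 * g_up l k * pairing s n a (theta m ** g)) / of_nat s"
  by (simp add: cubic_rhs_def pairing_add pairing_diff pairing_cscale)

text \<open>\<open>cubic_dual j [l, m, k]\<close> is the coefficient of \<open>\<theta>\<^sup>j \<^bold>g\<close> in \<open>cubic_rhs l m k\<close>.\<close>
definition cubic_dual :: "nat \<Rightarrow> nat list \<Rightarrow> complex" where
  "cubic_dual j w = (case w of
     [l, m, k] \<Rightarrow> (g_up l m * of_bool (k = j) + g_up m k * of_bool (l = j) - 2 * (g_up l k * of_bool (m = j))) / of_nat s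
   | _ \<Rightarrow> 0)"

lemma pairing_cubic_dual_theta_gel:
  assumes k: "k \<le> s" and j: "j \<le> s"
  shows "pairing s 3 (cubic_dual j) (theta k ** g) = of_bool (k = j)"
proof -
  have "pairing s 3 (cubic_dual j) (theta k ** g) = (\<Sum>a\<le>s. \<Sum>b\<le>s. g_lo a b * cubic_dual j [k, a, b])"
    unfolding theta_gel_eq_sum_mono using k
    by (simp add: pairing_sum pairing_cscale pairing_mono words_def)
  also have "\<dots> = (\<Sum>a\<le>s. \<Sum>b\<le>s. g_lo a b
      * (g_up k a * of_bool (b = j) + g_up a b * of_bool (k = j) - 2 * (g_up k b * of_bool (a = j)))) / of_nat s"
    by (simp add: cubic_dual_def sum_divide_distrib)
  also have "\<dots> = (of_bool (k = j) + of_nat (s + 1) * of_bool (k = j) - 2 * of_bool (k = j)) / of_nat s"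
    by (simp only: sum_sum_combination contract_left[OF k] contract_trace contract_right'[OF k])
  also have "\<dots> = of_bool (k = j)"
    using s_nonzero by (simp add: field_simps)
  finally show ?thesis .
qed

lemma cubic_dual_annihilates:
  assumes j: "j \<le> s"
  shows "annihilates_relations s G Gi 3 (cubic_dual j)"
  unfolding annihilates_relations_def
proof (intro allI impI)
  fix u v l m k
  assume "set u \<subseteq> {..s}" "set v \<subseteq> {..s}" and lmk: "l \<le> s" "m \<le> s" "k \<le> s"
    and "length u + 3 + length v = 3"
  then have "mono u ** rel s G Gi l m k ** mono v = mono [l, m, k] - cubic_rhs l m k"
    by (simp add: mono_Nil_ncmult ncmult_mono_Nil rel_eq_cubic_rhs theta_def mono_ncmult_mono)
  then show "pairing s 3 (cubic_dual j) (mono u ** rel s G Gi l m k ** mono v) = 0"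
    using lmk j
    by (simp add: pairing_diff pairing_mono words_def pairing_cubic_rhs pairing_cubic_dual_theta_gel cubic_dual_def)
qed

lemma basis_mod_degree_3: "basis_mod s G Gi 3 {..s} (\<lambda>l. theta l ** g)"
proof (rule basis_modI[where a = cubic_dual])
  show "(\<lambda>l. theta l ** g) ` {..s} \<subseteq> homog s 3"
    using homog_ncmult[OF theta_homog gel_homog] by (auto simp: numeral_3_eq_3)
  show "\<exists>x\<in>nc.span ((\<lambda>l. theta l ** g) ` {..s}). mono w - x \<in> relideal s G Gi"
    if w: "w \<in> words s 3" for w
  proof -
    obtain l m k where lmk: "w = [l, m, k]" "l \<le> s" "m \<le> s" "k \<le> s"
      using w by (auto simp: words_def length_Suc_conv numeral_3_eq_3)
    have "mono w \<approx> cubic_rhs l m k"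
      using cubic_cong[OF lmk(2-4)] by (simp add: lmk(1) theta_def mono_ncmult_mono)
    moreover have "cubic_rhs l m k \<in> nc.span ((\<lambda>l. theta l ** g) ` {..s})"
      unfolding cubic_rhs_def using lmk by (intro nc.span_scale nc.span_add nc.span_diff nc.span_base) auto
    ultimately show ?thesis
      unfolding cong_rel_def by blast
  qed
qed (auto simp: cubic_dual_annihilates pairing_cubic_dual_theta_gel)

definition quartic_dual :: "nat list \<Rightarrow> complex" where
  "quartic_dual w = (case w of [a, b, c, d] \<Rightarrow> quartic_coeff a b c d | _ \<Rightarrow> 0)"

lemma pairing_quartic_dual_theta_theta_gel:
  assumes x: "x \<le> s" and k: "k \<le> s"
  shows "pairing s 4 quartic_dual (theta x ** theta k ** g) = g_up x k / of_nat (s + 1)"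
proof -
  have "pairing s 4 quartic_dual (theta x ** theta k ** g) = (\<Sum>a\<le>s. \<Sum>b\<le>s. g_lo a b * quartic_coeff x k a b)"
    unfolding theta_theta_gel_eq_sum_mono using x k
    by (simp add: pairing_sum pairing_cscale pairing_mono words_def quartic_dual_def)
  also have "\<dots> = (\<Sum>a\<le>s. \<Sum>b\<le>s. g_lo a b * (g_up x k * g_up a b + g_up x b * g_up k a - 2 * (g_up x a * g_up k b)))
      / (of_nat s * of_nat (s + 1))"
    by (simp add: quartic_coeff_def sum_divide_distrib mult_ac)
  also have "(\<Sum>a\<le>s. \<Sum>b\<le>s. g_lo a b * (g_up x k * g_up a b + g_up x b * g_up k a - 2 * (g_up x a * g_up k b)))
      = of_nat (s + 1) * g_up x k + g_up k x - 2 * g_up k x"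
    by (simp only: sum_sum_combination contract_trace contract_right'[OF x] contract_left[OF x] mult.commute[of "g_up x k"])
  also have "\<dots> = of_nat s * g_up x k"
    using g_up_sym[OF x k] by (simp add: algebra_simps)
  finally show ?thesis
    using s_nonzero by simp
qed

lemma pairing_quartic_dual_theta_gel_theta:
  assumes k: "k \<le> s" and x: "x \<le> s"
  shows "pairing s 4 quartic_dual (theta k ** g ** theta x) = g_up k x / of_nat (s + 1)"
proof -
  have "pairing s 4 quartic_dual (theta k ** g ** theta x) = (\<Sum>a\<le>s. \<Sum>b\<le>s. g_lo a b * quartic_coeff k a b x)"
    unfolding theta_gel_theta_eq_sum_mono using x k
    by (simp add: pairing_sum pairing_cscale pairing_mono words_def quartic_dual_def)
  also have "\<dots> = (\<Sum>a\<le>s. \<Sum>b\<le>s. g_lo a b * (g_up k a * g_up b x + g_up k x * g_up a b - 2 * (g_up k b * g_up a x)))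
      / (of_nat s * of_nat (s + 1))"
    by (simp add: quartic_coeff_def sum_divide_distrib mult_ac)
  also have "(\<Sum>a\<le>s. \<Sum>b\<le>s. g_lo a b * (g_up k a * g_up b x + g_up k x * g_up a b - 2 * (g_up k b * g_up a x)))
      = g_up k x + of_nat (s + 1) * g_up k x - 2 * g_up k x"
    by (simp only: sum_sum_combination contract_trace contract_right'[OF k] contract_left[OF k] mult.commute[of "g_up k x"])
  also have "\<dots> = of_nat s * g_up k x"
    by (simp add: algebra_simps)
  finally show ?thesis
    using s_nonzero by simp
qed

lemma pairing_quartic_dual_gel_gel: "pairing s 4 quartic_dual (g ** g) = 1"
proof -
  have "pairing s 4 quartic_dual (g ** g) = (\<Sum>a\<le>s. \<Sum>b\<le>s. g_lo a b * (g_up a b * (1 / of_nat (s + 1))))"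
    unfolding sum_theta_theta_gel[symmetric]
    by (simp add: pairing_sum pairing_cscale pairing_quartic_dual_theta_theta_gel)
  also have "\<dots> = 1"
    using s_plus_1_nonzero by (simp only: contract_trace) (simp add: add.commute)
  finally show ?thesis .
qed

lemma pairing_quartic_dual_theta_rel:
  assumes "y \<le> s" "l \<le> s" "m \<le> s" "k \<le> s"
  shows "pairing s 4 quartic_dual (theta y ** rel s G Gi l m k) = 0"
proof -
  let ?q = "\<lambda>x y. g_up x y / of_nat (s + 1)"
  have "theta y ** rel s G Gi l m k = mono [y, l, m, k] - theta y ** cubic_rhs l m k"
    by (simp add: rel_eq_cubic_rhs ncmult_diff_right mono_ncmult_mono theta_def)
  then have "pairing s 4 quartic_dual (theta y ** rel s G Gi l m k)
      = quartic_coeff y l m k - 1 / of_nat s * (g_up l m * ?q y k + g_up m k * ?q y l - 2 * g_up l k * ?q y m)"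
    unfolding theta_ncmult_cubic_rhs using assms
    by (simp add: pairing_diff pairing_add pairing_cscale pairing_mono words_def quartic_dual_def
        pairing_quartic_dual_theta_theta_gel)
  also have "\<dots> = 0"
    by (simp add: quartic_coeff_def add_divide_distrib diff_divide_distrib algebra_simps)
  finally show ?thesis .
qed

lemma pairing_quartic_dual_rel_theta:
  assumes "y \<le> s" "l \<le> s" "m \<le> s" "k \<le> s"
  shows "pairing s 4 quartic_dual (rel s G Gi l m k ** theta y) = 0"
proof -
  let ?q = "\<lambda>x y. g_up x y / of_nat (s + 1)"
  have "rel s G Gi l m k ** theta y = mono [l, m, k, y] - cubic_rhs l m k ** theta y"
    by (simp add: rel_eq_cubic_rhs ncmult_diff_left mono_ncmult_mono theta_def)
  then have "pairing s 4 quartic_dual (rel s G Gi l m k ** theta y)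
      = quartic_coeff l m k y - 1 / of_nat s * (g_up l m * ?q k y + g_up m k * ?q l y - 2 * g_up l k * ?q m y)"
    unfolding cubic_rhs_ncmult_theta using assms
    by (simp add: pairing_diff pairing_add pairing_cscale pairing_mono words_def quartic_dual_def
        pairing_quartic_dual_theta_gel_theta)
  also have "\<dots> = 0"
    by (simp add: quartic_coeff_def add_divide_distrib diff_divide_distrib algebra_simps)
  finally show ?thesis .
qed

lemma quartic_dual_annihilates: "annihilates_relations s G Gi 4 quartic_dual"
  unfolding annihilates_relations_def
proof (intro allI impI)
  fix u v l m k
  assume uv: "set u \<subseteq> {..s}" "set v \<subseteq> {..s}" and lmk: "l \<le> s" "m \<le> s" "k \<le> s"
    and "length u + 3 + length v = 4"
  then consider y where "u = [y]" "v = []" "y \<le> s" | y where "u = []" "v = [y]" "y \<le> s"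
    by (cases u; cases v) auto
  then show "pairing s 4 quartic_dual (mono u ** rel s G Gi l m k ** mono v) = 0"
  proof cases
    case 1
    then show ?thesis
      using pairing_quartic_dual_theta_rel lmk by (simp add: ncmult_mono_Nil theta_def)
  next
    case 2
    then show ?thesis
      using pairing_quartic_dual_rel_theta lmk by (simp add: mono_Nil_ncmult theta_def)
  qed
qed

lemma basis_mod_degree_4: "basis_mod s G Gi 4 {()} (\<lambda>_. g ** g)"
proof (rule basis_modI[where a = "\<lambda>_. quartic_dual"])
  show "(\<lambda>_. g ** g) ` {()} \<subseteq> homog s 4"
    using homog_ncmult[OF gel_homog gel_homog] by simp
  show "\<exists>x\<in>nc.span ((\<lambda>_. g ** g) ` {()}). mono w - x \<in> relideal s G Gi"
    if w: "w \<in> words s 4" for w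
  proof -
    obtain a b c d where abcd: "w = [a, b, c, d]" "a \<le> s" "b \<le> s" "c \<le> s" "d \<le> s"
      using w by (auto simp: words_def length_Suc_conv numeral_eq_Suc)
    have "mono w \<approx> cscale (quartic_coeff a b c d) (g ** g)"
      using quartic_cong[OF abcd(2-5)] by (simp add: abcd(1) theta_def mono_ncmult_mono)
    moreover have "cscale (quartic_coeff a b c d) (g ** g) \<in> nc.span ((\<lambda>_. g ** g) ` {()})"
      by (intro nc.span_scale nc.span_base) simp
    ultimately show ?thesis
      unfolding cong_rel_def by blast
  qed
qed (simp_all add: quartic_dual_annihilates pairing_quartic_dual_gel_gel)

end

lemma basis_mod_degree_0: "basis_mod s G Gi 0 {()} (\<lambda>_. ncone)"
proof -
  have "bij_betw (\<lambda>_. []) {()} (words s 0)"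
    by (auto simp: bij_betw_def words_def)
  then show ?thesis
    using basis_mod_mono_low_degree[of 0 "\<lambda>_. []"] by (simp add: ncone_def)
qed

lemma basis_mod_degree_1: "basis_mod s G Gi 1 {..s} theta"
proof -
  have "bij_betw (\<lambda>l. [l]) {..s} (words s 1)"
    by (auto simp: bij_betw_def inj_on_def words_def length_Suc_conv)
  then show ?thesis
    using basis_mod_mono_low_degree[of 1 "\<lambda>l. [l]"] by (simp add: theta_def[abs_def])
qed

lemma basis_mod_degree_2: "basis_mod s G Gi 2 ({..s} \<times> {..s}) (\<lambda>(\<mu>, \<nu>). theta \<mu> ** theta \<nu>)"
proof -
  have "bij_betw (\<lambda>(\<mu>, \<nu>). [\<mu>, \<nu>]) ({..s} \<times> {..s}) (words s 2)"
    by (auto simp: bij_betw_def inj_on_def words_def length_Suc_conv numeral_2_eq_2 image_iff)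
  moreover have "(\<lambda>(\<mu>, \<nu>). theta \<mu> ** theta \<nu>) = (\<lambda>i. mono ((\<lambda>(\<mu>, \<nu>). [\<mu>, \<nu>]) i))"
    by (auto simp: theta_def mono_ncmult_mono)
  ultimately show ?thesis
    using basis_mod_mono_low_degree[of 2 "\<lambda>(\<mu>, \<nu>). [\<mu>, \<nu>]"] by simp
qed

theorem proposition1:
  fixes s :: nat and G Gi :: "nat \<Rightarrow> nat \<Rightarrow> real"
  assumes "s \<ge> 1"
    and "\<forall>\<mu>\<le>s. \<forall>\<nu>\<le>s. G \<mu> \<nu> = G \<nu> \<mu>"
    and "\<forall>\<mu>\<le>s. \<forall>\<nu>\<le>s. (\<Sum>\<alpha>\<le>s. G \<mu> \<alpha> * Gi \<alpha> \<nu>) = (if \<mu> = \<nu> then 1 else 0)"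
    and "\<forall>\<mu>\<le>s. \<forall>\<nu>\<le>s. (\<Sum>\<alpha>\<le>s. Gi \<mu> \<alpha> * G \<alpha> \<nu>) = (if \<mu> = \<nu> then 1 else 0)"
  shows "basis_mod s G Gi 0 {()} (\<lambda>_. ncone)
    \<and> basis_mod s G Gi 1 {..s} theta
    \<and> basis_mod s G Gi 2 ({..s} \<times> {..s}) (\<lambda>(\<mu>, \<nu>). theta \<mu> ** theta \<nu>)
    \<and> basis_mod s G Gi 3 {..s} (\<lambda>l. theta l ** gel s G)
    \<and> basis_mod s G Gi 4 {()} (\<lambda>_. gel s G ** gel s G)
    \<and> (\<forall>n\<ge>5. homog s n \<subseteq> relideal s G Gi)
    \<and> dimA s G Gi 0 = 1 \<and> dimA s G Gi 4 = 1
    \<and> dimA s G Gi 1 = s + 1 \<and> dimA s G Gi 3 = s + 1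
    \<and> dimA s G Gi 2 = (s + 1)^2"
proof -
  interpret inverse_metric s G Gi
    by unfold_locales (rule assms)+
  note bases = basis_mod_degree_0 basis_mod_degree_1 basis_mod_degree_2 basis_mod_degree_3 basis_mod_degree_4
  then show ?thesis
    using homog_subset_relideal dimA_eq_card[OF bases(1)] dimA_eq_card[OF bases(2)] dimA_eq_card[OF bases(3)]
      dimA_eq_card[OF bases(4)] dimA_eq_card[OF bases(5)]
    by (simp add: power2_eq_square)
qed

end
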